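(* Let $X$ be a non-empty finite set and $\mathcal{P}$ a partition of $X$ such that $\mathcal{P}$ has exactly $m_i\ge 2$ blocks of size $n_i\ge 2$ for $i=1,\dots,p$ (the $n_i$ pairwise distinct), exactly one block of each of the sizes $l_1,\dots,l_q$ with each $l_i\ge 2$ (these sizes distinct from each other and from the $n_i$), and $t$ singleton blocks, and no other blocks ($p,q,t$ may be $0$). Then $$\operatorname{rank}(T(X,\mathcal{P}):\Sigma(X,\mathcal{P}))=\binom{p+q}{2}+p+h(p,q,t),$$ where $h(p,q,0)=0$, $h(p,q,1)=p+q$ and $h(p,q,t)=p+q+1$ for $t\ge 2$.
   Context: $T(X,\mathcal{P})$ is the semigroup (under composition) of maps $f:X\to X$ such that for every block $P$ of $\mathcal{P}$ there is a block $Q$ with $Pf\subseteq Q$; $\Sigma(X,\mathcal{P})$ is the subsemigroup of those $f\in T(X,\mathcal{P})$ whose image intersects every block of $\mathcal{P}$. For a subsemigroup $U$ of a semigroup $V$, the relative rank $\operatorname{rank}(V:U)$ is the least cardinality of a subset $W\subseteq V$ such that $U\cup W$ generates $V$ as a semigroup. *)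

theory Defs
  imports Main "HOL-Library.FuncSet" "HOL-Library.Disjoint_Sets"
begin

text \<open>Maps X -> X are represented extensionally (undefined outside X);
  the semigroup operation is composition restricted to X.\<close>

definition Tpart :: "'a set \<Rightarrow> 'a set set \<Rightarrow> ('a \<Rightarrow> 'a) set" where
  "Tpart X P = {f \<in> X \<rightarrow>\<^sub>E X. \<forall>B\<in>P. \<exists>C\<in>P. f ` B \<subseteq> C}"

definition Sigmapart :: "'a set \<Rightarrow> 'a set set \<Rightarrow> ('a \<Rightarrow> 'a) set" where
  "Sigmapart X P = {f \<in> Tpart X P. \<forall>B\<in>P. f ` X \<inter> B \<noteq> {}}"

inductive_set sgen :: "'a set \<Rightarrow> ('a \<Rightarrow> 'a) set \<Rightarrow> ('a \<Rightarrow> 'a) set"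
  for X :: "'a set" and S :: "('a \<Rightarrow> 'a) set" where
  base: "f \<in> S \<Longrightarrow> f \<in> sgen X S"
| comp: "f \<in> sgen X S \<Longrightarrow> g \<in> sgen X S \<Longrightarrow> compose X g f \<in> sgen X S"

definition relrank :: "'a set \<Rightarrow> ('a \<Rightarrow> 'a) set \<Rightarrow> ('a \<Rightarrow> 'a) set \<Rightarrow> nat" where
  "relrank X V U = (LEAST k. \<exists>W. W \<subseteq> V \<and> finite W \<and> card W = k \<and> sgen X (U \<union> W) = V)"

definition hfun :: "nat \<Rightarrow> nat \<Rightarrow> nat \<Rightarrow> nat" where
  "hfun p q t = (if t = 0 then 0 else if t = 1 then p + q else p + q + 1)"

end

theory Submission
  imports Defs
begin

text \<open>
  For \<open>f \<in> T(X,P)\<close> let \<open>block_map f\<close> be the induced map on blocks; \<open>f \<in> \<Sigma>(X,P)\<close> iff it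
  is a permutation. Call \<open>f\<close> collapsing of type \<open>{|B1|, |B2|}\<close> if \<open>f\<close> is injective on every
  block and \<open>block_map f\<close> identifies exactly the two blocks \<open>B1 \<noteq> B2\<close>. If a product \<open>g \<circ> f\<close> is
  collapsing, then so is \<open>f\<close> (when \<open>block_map f\<close> is not injective) or \<open>g\<close> (otherwise \<open>f\<close> maps
  every block bijectively onto its image block). Hence a set \<open>W\<close> with \<open>\<langle>\<Sigma> \<union> W\<rangle> = T\<close> contains
  collapsing maps of every type, and no map has two types.

  Conversely one collapsing map per type suffices: composing it on both sides with elements of
  \<open>\<Sigma>\<close> yields every map that sends a block \<open>U\<close> into a block \<open>V \<noteq> U\<close> of this type and fixes
  all other points. Every \<open>f \<in> T\<close> whose block map is not onto factors as \<open>g \<circ> e \<circ> \<sigma>\<close> with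
  \<open>\<sigma> \<in> \<Sigma>\<close>, \<open>e\<close> such a move and the block image of \<open>g\<close> strictly larger than that of \<open>f\<close>;
  induction on the size of the block image generates \<open>T\<close>.

  So the relative rank is the number of types: \<open>C(k,2) + r\<close>, where \<open>k\<close> block sizes occur and
  \<open>r\<close> of them occur at least twice. Here \<open>k = p + q + [t > 0]\<close> and \<open>r = p + [t \<ge> 2]\<close>.
\<close>

lemma two_le_card_iff:
  assumes "finite S"
  shows "2 \<le> card S \<longleftrightarrow> (\<exists>x\<in>S. \<exists>y\<in>S. x \<noteq> y)"
proof
  assume two: "2 \<le> card S"
  then have "S \<noteq> {}" by auto
  then obtain x where x: "x \<in> S" by blast
  have "card (S - {x}) = card S - 1" using x assms by simp
  with two have "card (S - {x}) \<noteq> 0" by simp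
  then have "S - {x} \<noteq> {}" by (metis card.empty)
  with x show "\<exists>x\<in>S. \<exists>y\<in>S. x \<noteq> y" by blast
next
  assume "\<exists>x\<in>S. \<exists>y\<in>S. x \<noteq> y"
  then obtain x y where xy: "{x, y} \<subseteq> S" "x \<noteq> y" by blast
  then have "card {x, y} \<le> card S" using card_mono[OF assms] by blast
  with xy(2) show "2 \<le> card S" by simp
qed

lemma inj_on_extend:
  assumes "finite V" "finite A" "card V \<le> card A" "R \<subseteq> V" "inj_on \<theta> R" "\<theta> ` R \<subseteq> A"
  obtains \<kappa> where "inj_on \<kappa> V" "\<kappa> ` V \<subseteq> A" "\<And>r. r \<in> R \<Longrightarrow> \<kappa> r = \<theta> r"
proof -
  have fin_R: "finite R" using finite_subset[OF assms(4,1)] .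
  have "card (V - R) = card V - card R" using card_Diff_subset[OF fin_R assms(4)] .
  moreover have "card (A - \<theta> ` R) = card A - card R"
    using card_Diff_subset[OF finite_imageI[OF fin_R] assms(6)] card_image[OF assms(5)] by simp
  ultimately have "card (V - R) \<le> card (A - \<theta> ` R)" using assms(3) by simp
  then obtain \<delta> where \<delta>: "\<delta> ` (V - R) \<subseteq> A - \<theta> ` R" "inj_on \<delta> (V - R)"
    using card_le_inj[of "V - R" "A - \<theta> ` R"] assms(1,2) by blast
  define \<kappa> where "\<kappa> x = (if x \<in> R then \<theta> x else \<delta> x)" for x
  have "inj_on \<kappa> R" using assms(5) by (simp add: \<kappa>_def inj_on_def)
  moreover have "inj_on \<kappa> (V - R)" using \<delta>(2) by (simp add: \<kappa>_def inj_on_def)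
  moreover have "\<kappa> ` R \<inter> \<kappa> ` (V - R) = {}" using \<delta>(1) by (auto simp: \<kappa>_def)
  moreover have "R - (V - R) = R" "(V - R) - R = V - R" by blast+
  ultimately have "inj_on \<kappa> (R \<union> (V - R))" unfolding inj_on_Un by simp
  moreover have "R \<union> (V - R) = V" using assms(4) by blast
  moreover have "\<kappa> ` V \<subseteq> A" using assms(6) \<delta>(1) by (auto simp: \<kappa>_def)
  ultimately show ?thesis using that[of \<kappa>] by (simp add: \<kappa>_def)
qed

lemma exists_invariant_subset_entry:
  assumes fin: "finite A" and into: "b ` A \<subseteq> A" and not_onto: "b ` A \<noteq> A"
  obtains Q B where "Q \<subseteq> A" "b ` Q = Q" "B \<in> A" "B \<notin> Q" "b B \<in> Q"
proof -
  define I where "I k = (b ^^ k) ` A" for k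
  have I_Suc: "I (Suc k) = b ` I k" for k by (simp add: I_def image_comp)
  have I_decr: "I (Suc k) \<subseteq> I k" for k
  proof (induction k)
    case 0 show ?case using into by (simp add: I_def)
  next
    case (Suc k) then show ?case by (simp add: I_Suc image_mono)
  qed
  have I_antimono: "i \<le> j \<Longrightarrow> I j \<subseteq> I i" for i j
    by (rule lift_Suc_antimono_le[of I, OF I_decr])
  have I_sub: "I k \<subseteq> A" for k using I_antimono[of 0 k] by (simp add: I_def)
  have "\<not> inj I"
  proof
    assume "inj I"
    moreover have "finite (range I)"
      using I_sub finite_subset[of "range I" "Pow A"] fin by blast
    ultimately show False using finite_imageD infinite_UNIV_nat by blast
  qed
  then have "\<exists>i j. i < j \<and> I i = I j" unfolding inj_def by (metis linorder_neqE_nat)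
  then obtain i j where "i < j" "I i = I j" by blast
  then have "I (Suc i) = I i" using I_antimono[of "Suc i" j] I_decr[of i] by simp
  then have Q_inv: "b ` I i = I i" by (simp add: I_Suc)
  with not_onto have "I i \<noteq> A" by auto
  then obtain B0 where B0: "B0 \<in> A - I i" using I_sub by blast
  have "\<exists>B\<in>A - I i. b B \<in> I i"
  proof (rule ccontr)
    assume no_entry: "\<not> ?thesis"
    have "(b ^^ k) B0 \<in> A - I i" for k
    proof (induction k)
      case (Suc k) then show ?case using no_entry into by auto
    qed (use B0 in simp)
    moreover have "(b ^^ i) B0 \<in> I i" using B0 by (simp add: I_def)
    ultimately show False by blast
  qed
  then show ?thesis using that I_sub Q_inv by blast
qed

lemma exists_retraction_factorization:
  assumes "finite V" "finite A1" "card V \<le> card A1" "V \<noteq> {}" "\<phi> ` U \<subseteq> V"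
    and "finite A2" "card (\<phi> ` U) \<le> card A2" "\<iota> ` A2 \<subseteq> A1" "inj_on \<iota> A2"
  obtains \<alpha> \<kappa> \<rho> where "\<alpha> ` U \<subseteq> A2" "\<kappa> ` V \<subseteq> A1" "\<rho> ` A1 \<subseteq> V"
    "\<forall>v\<in>V. \<rho> (\<kappa> v) = v" "\<forall>x\<in>U. \<rho> (\<iota> (\<alpha> x)) = \<phi> x"
proof -
  have fin: "finite (\<phi> ` U)" using finite_subset[OF assms(5,1)] .
  have "card (\<phi> ` U) \<le> card (\<iota> ` A2)" using assms(7) card_image[OF assms(9)] by simp
  then obtain \<theta> where \<theta>: "\<theta> ` \<phi> ` U \<subseteq> \<iota> ` A2" "inj_on \<theta> (\<phi> ` U)"
    using card_le_inj[OF fin finite_imageI[OF assms(6)]] by blast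
  have "\<theta> ` \<phi> ` U \<subseteq> A1" using \<theta>(1) assms(8) by blast
  then obtain \<kappa> where \<kappa>: "inj_on \<kappa> V" "\<kappa> ` V \<subseteq> A1" "\<And>r. r \<in> \<phi> ` U \<Longrightarrow> \<kappa> r = \<theta> r"
    by (rule inj_on_extend[OF assms(1-3,5) \<theta>(2)]) (rule that)
  obtain v0 where v0: "v0 \<in> V" using assms(4) by blast
  define \<alpha> where "\<alpha> x = inv_into A2 \<iota> (\<kappa> (\<phi> x))" for x
  define \<rho> where "\<rho> y = (if y \<in> \<kappa> ` V then inv_into V \<kappa> y else v0)" for y
  have \<kappa>_\<phi>: "\<kappa> (\<phi> x) \<in> \<iota> ` A2" if "x \<in> U" for x using \<theta>(1) \<kappa>(3) that by auto
  show ?thesis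
  proof (rule that)
    show "\<alpha> ` U \<subseteq> A2" using \<kappa>_\<phi> by (auto simp: \<alpha>_def inv_into_into)
    show "\<kappa> ` V \<subseteq> A1" using \<kappa>(2) .
    show "\<rho> ` A1 \<subseteq> V" using v0 by (auto simp: \<rho>_def inv_into_into)
    show "\<forall>v\<in>V. \<rho> (\<kappa> v) = v" using \<kappa>(1) by (simp add: \<rho>_def)
    show "\<forall>x\<in>U. \<rho> (\<iota> (\<alpha> x)) = \<phi> x"
    proof
      fix x assume "x \<in> U"
      then have "\<iota> (\<alpha> x) = \<kappa> (\<phi> x)" using \<kappa>_\<phi> by (simp add: \<alpha>_def f_inv_into_f)
      moreover have "\<phi> x \<in> V" using assms(5) \<open>x \<in> U\<close> by blast
      ultimately show "\<rho> (\<iota> (\<alpha> x)) = \<phi> x" using \<kappa>(1) by (simp add: \<rho>_def)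
    qed
  qed
qed

lemma sgen_mono: "S \<subseteq> S' \<Longrightarrow> sgen X S \<subseteq> sgen X S'"
proof
  show "f \<in> sgen X S'" if "f \<in> sgen X S" "S \<subseteq> S'" for f
    using that by induction (auto intro: sgen.intros)
qed

section \<open>Blocks and block maps\<close>

locale partitioned_set =
  fixes X :: "'a set" and P :: "'a set set"
  assumes finite_X: "finite X" and partition: "partition_on X P"
begin

abbreviation TP :: "('a \<Rightarrow> 'a) set" where "TP \<equiv> Tpart X P"
abbreviation SigmaP :: "('a \<Rightarrow> 'a) set" where "SigmaP \<equiv> Sigmapart X P"

lemma finite_blocks: "finite P"
  using finite_elements[OF finite_X partition] .

lemma block_nonempty: "B \<in> P \<Longrightarrow> B \<noteq> {}"
  using partition_onD3[OF partition] by auto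

lemma block_subset: "B \<in> P \<Longrightarrow> B \<subseteq> X"
  using partition_onD1[OF partition] by auto

lemma finite_block: "B \<in> P \<Longrightarrow> finite B"
  using block_subset finite_X finite_subset by blast

lemma block_eqI: "B \<in> P \<Longrightarrow> C \<in> P \<Longrightarrow> x \<in> B \<Longrightarrow> x \<in> C \<Longrightarrow> B = C"
  using partition_onD2[OF partition] unfolding disjoint_def by blast

lemma block_disjoint: "B \<in> P \<Longrightarrow> C \<in> P \<Longrightarrow> B \<noteq> C \<Longrightarrow> x \<in> B \<Longrightarrow> x \<notin> C"
  using block_eqI by blast

lemma ex_block: "x \<in> X \<Longrightarrow> \<exists>B\<in>P. x \<in> B"
  using partition_onD1[OF partition] by auto

lemma mem_Union_blocks_iff:
  assumes "Q \<subseteq> P" "B \<in> P" "x \<in> B"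
  shows "x \<in> \<Union>Q \<longleftrightarrow> B \<in> Q"
  using assms block_eqI[OF assms(2) _ assms(3)] by blast

text \<open>Only meaningful for \<open>f \<in> TP\<close>; otherwise \<open>THE\<close> may return an arbitrary set.\<close>

definition block_map :: "('a \<Rightarrow> 'a) \<Rightarrow> 'a set \<Rightarrow> 'a set" where
  "block_map f B = (THE C. C \<in> P \<and> f ` B \<subseteq> C)"

lemma block_map_eqI:
  assumes "B \<in> P" "C \<in> P" "f ` B \<subseteq> C"
  shows "block_map f B = C"
  unfolding block_map_def
proof (rule the_equality)
  fix C' assume "C' \<in> P \<and> f ` B \<subseteq> C'"
  moreover obtain x where "x \<in> B" using block_nonempty[OF assms(1)] by auto
  ultimately show "C' = C" using assms block_eqI[of C' C "f x"] by auto
qed (use assms in auto)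

lemma
  assumes "f \<in> TP" "B \<in> P"
  shows block_map_in_blocks: "block_map f B \<in> P"
    and image_subset_block_map: "f ` B \<subseteq> block_map f B"
proof -
  obtain C where "C \<in> P" "f ` B \<subseteq> C" using assms unfolding Tpart_def by blast
  with block_map_eqI[OF assms(2)] show "block_map f B \<in> P" "f ` B \<subseteq> block_map f B"
    by auto
qed

lemma Tpart_undefined: "f \<in> TP \<Longrightarrow> x \<notin> X \<Longrightarrow> f x = undefined"
  unfolding Tpart_def by auto

lemma Tpart_in_X: "f \<in> TP \<Longrightarrow> x \<in> X \<Longrightarrow> f x \<in> X"
  unfolding Tpart_def by auto

lemma
  assumes ext: "\<And>x. x \<notin> X \<Longrightarrow> f x = undefined"
    and \<beta>: "\<And>B. B \<in> P \<Longrightarrow> \<beta> B \<in> P" "\<And>B x. B \<in> P \<Longrightarrow> x \<in> B \<Longrightarrow> f x \<in> \<beta> B"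
  shows blockwise_in_Tpart: "f \<in> TP"
    and block_map_blockwise: "B \<in> P \<Longrightarrow> block_map f B = \<beta> B"
proof -
  have "f x \<in> X" if "x \<in> X" for x
  proof -
    obtain B where "B \<in> P" "x \<in> B" using ex_block \<open>x \<in> X\<close> by blast
    then show ?thesis using \<beta> block_subset by blast
  qed
  moreover have "\<exists>C\<in>P. f ` B \<subseteq> C" if "B \<in> P" for B using \<beta> that by blast
  ultimately show "f \<in> TP" unfolding Tpart_def using ext by (auto simp: extensional_def)
  show "B \<in> P \<Longrightarrow> block_map f B = \<beta> B" using \<beta> by (intro block_map_eqI) auto
qed

lemma block_map_image_eq_iff_inj:
  assumes "f \<in> TP"
  shows "block_map f ` P = P \<longleftrightarrow> inj_on (block_map f) P"
proof
  show "inj_on (block_map f) P" if "block_map f ` P = P"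
    using that finite_blocks by (simp add: eq_card_imp_inj_on)
  show "block_map f ` P = P" if "inj_on (block_map f) P"
    using that finite_blocks block_map_in_blocks[OF assms] by (simp add: endo_inj_surj image_subsetI)
qed

lemma Sigmapart_iff: "f \<in> SigmaP \<longleftrightarrow> f \<in> TP \<and> block_map f ` P = P"
proof
  assume f: "f \<in> SigmaP"
  then have fT: "f \<in> TP" unfolding Sigmapart_def by auto
  have "E \<in> block_map f ` P" if "E \<in> P" for E
  proof -
    have "f ` X \<inter> E \<noteq> {}" using f that unfolding Sigmapart_def by blast
    then obtain x where "x \<in> X" "f x \<in> E" by blast
    obtain B where B: "B \<in> P" "x \<in> B" using ex_block \<open>x \<in> X\<close> by blast
    then have "f x \<in> block_map f B" using image_subset_block_map[OF fT B(1)] by blast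
    then have "E = block_map f B"
      using block_eqI[OF that block_map_in_blocks[OF fT B(1)] \<open>f x \<in> E\<close>] by blast
    then show ?thesis using B(1) by blast
  qed
  then show "f \<in> TP \<and> block_map f ` P = P" using fT block_map_in_blocks by auto
next
  assume f: "f \<in> TP \<and> block_map f ` P = P"
  have "f ` X \<inter> E \<noteq> {}" if "E \<in> P" for E
  proof -
    obtain B where B: "B \<in> P" "E = block_map f B" using f \<open>E \<in> P\<close> by blast
    then obtain x where "x \<in> B" using block_nonempty by blast
    then have "f x \<in> E" "x \<in> X" using image_subset_block_map[of f B] f B block_subset by auto
    then show ?thesis by blast
  qed
  then show "f \<in> SigmaP" using f unfolding Sigmapart_def by auto
qed

lemma blockwise_in_Sigmapart:
  assumes "\<And>x. x \<notin> X \<Longrightarrow> f x = undefined"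
    and "\<And>B. B \<in> P \<Longrightarrow> \<beta> B \<in> P" "\<And>B x. B \<in> P \<Longrightarrow> x \<in> B \<Longrightarrow> f x \<in> \<beta> B"
    and "P \<subseteq> \<beta> ` P"
  shows "f \<in> SigmaP"
proof -
  have "block_map f ` P = \<beta> ` P" using block_map_blockwise[of f \<beta>, OF assms(1-3)] by simp
  moreover have "\<beta> ` P = P" using assms(2,4) by blast
  ultimately have "block_map f ` P = P" by simp
  with blockwise_in_Tpart[of f \<beta>, OF assms(1-3)] show ?thesis unfolding Sigmapart_iff by blast
qed

lemma Sigmapart_Tpart: "f \<in> SigmaP \<Longrightarrow> f \<in> TP"
  unfolding Sigmapart_def by auto

lemma
  assumes "f \<in> TP" "g \<in> TP"
  shows compose_in_Tpart: "compose X g f \<in> TP"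
    and block_map_compose: "B \<in> P \<Longrightarrow> block_map (compose X g f) B = block_map g (block_map f B)"
proof -
  have mem: "compose X g f x \<in> block_map g (block_map f B)" if "B \<in> P" "x \<in> B" for B x
  proof -
    have "f x \<in> block_map f B" using image_subset_block_map[OF assms(1) that(1)] that(2) by blast
    then have "g (f x) \<in> block_map g (block_map f B)"
      using image_subset_block_map[OF assms(2) block_map_in_blocks[OF assms(1) that(1)]] by blast
    moreover have "x \<in> X" using block_subset that by blast
    ultimately show ?thesis by (simp add: compose_def)
  qed
  have blocks: "block_map g (block_map f B) \<in> P" if "B \<in> P" for B
    using that assms block_map_in_blocks by blast
  have ext: "compose X g f x = undefined" if "x \<notin> X" for x
    using that by (simp add: compose_def)
  show "compose X g f \<in> TP"
    and "B \<in> P \<Longrightarrow> block_map (compose X g f) B = block_map g (block_map f B)"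
    using blockwise_in_Tpart[of "compose X g f" "\<lambda>B. block_map g (block_map f B)", OF ext blocks mem]
      block_map_blockwise[of "compose X g f" "\<lambda>B. block_map g (block_map f B)", OF ext blocks mem] by auto
qed

lemma sgen_subset_Tpart: "S \<subseteq> TP \<Longrightarrow> sgen X S \<subseteq> TP"
proof
  show "f \<in> TP" if "f \<in> sgen X S" "S \<subseteq> TP" for f
    using that by induction (auto intro: compose_in_Tpart)
qed

section \<open>Collapsing maps and the lower bound\<close>

text \<open>The size type of a pair of distinct blocks; \<open>{a}\<close> stands for two blocks of size \<open>a\<close>.\<close>

definition pair_types :: "nat set set" where
  "pair_types = {{card B1, card B2} | B1 B2. B1 \<in> P \<and> B2 \<in> P \<and> B1 \<noteq> B2}"

definition collapsing :: "nat set \<Rightarrow> ('a \<Rightarrow> 'a) set" where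
  "collapsing \<tau> = {f \<in> TP. (\<forall>B\<in>P. inj_on f B) \<and>
     (\<exists>B1\<in>P. \<exists>B2\<in>P. B1 \<noteq> B2 \<and> {card B1, card B2} = \<tau> \<and>
        (\<forall>B\<in>P. \<forall>B'\<in>P. B \<noteq> B' \<longrightarrow> (block_map f B = block_map f B' \<longleftrightarrow> {B, B'} = {B1, B2})))}"

lemma collapsingI:
  assumes "f \<in> TP" "\<And>B. B \<in> P \<Longrightarrow> inj_on f B" "B1 \<in> P" "B2 \<in> P" "B1 \<noteq> B2"
    "{card B1, card B2} = \<tau>"
    "\<And>B B'. B \<in> P \<Longrightarrow> B' \<in> P \<Longrightarrow> B \<noteq> B' \<Longrightarrow>
       block_map f B = block_map f B' \<longleftrightarrow> {B, B'} = {B1, B2}"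
  shows "f \<in> collapsing \<tau>"
proof -
  have "\<forall>B\<in>P. \<forall>B'\<in>P. B \<noteq> B' \<longrightarrow> (block_map f B = block_map f B' \<longleftrightarrow> {B, B'} = {B1, B2})"
    using assms(7) by simp
  then have "\<exists>B1\<in>P. \<exists>B2\<in>P. B1 \<noteq> B2 \<and> {card B1, card B2} = \<tau> \<and>
      (\<forall>B\<in>P. \<forall>B'\<in>P. B \<noteq> B' \<longrightarrow> (block_map f B = block_map f B' \<longleftrightarrow> {B, B'} = {B1, B2}))"
    using assms(3-6) by blast
  then show ?thesis unfolding collapsing_def using assms(1,2) by simp
qed

lemma collapsingE:
  assumes "f \<in> collapsing \<tau>"
  obtains B1 B2 where "f \<in> TP" "\<And>B. B \<in> P \<Longrightarrow> inj_on f B" "B1 \<in> P" "B2 \<in> P" "B1 \<noteq> B2"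
    "{card B1, card B2} = \<tau>"
    "\<And>B B'. B \<in> P \<Longrightarrow> B' \<in> P \<Longrightarrow> B \<noteq> B' \<Longrightarrow>
       block_map f B = block_map f B' \<longleftrightarrow> {B, B'} = {B1, B2}"
proof -
  have f: "f \<in> TP" "\<forall>B\<in>P. inj_on f B"
    and "\<exists>B1\<in>P. \<exists>B2\<in>P. B1 \<noteq> B2 \<and> {card B1, card B2} = \<tau> \<and>
      (\<forall>B\<in>P. \<forall>B'\<in>P. B \<noteq> B' \<longrightarrow> (block_map f B = block_map f B' \<longleftrightarrow> {B, B'} = {B1, B2}))"
    using assms unfolding collapsing_def by simp_all
  then obtain B1 B2 where "B1 \<in> P" "B2 \<in> P" "B1 \<noteq> B2" "{card B1, card B2} = \<tau>"
    and "\<forall>B\<in>P. \<forall>B'\<in>P. B \<noteq> B' \<longrightarrow> (block_map f B = block_map f B' \<longleftrightarrow> {B, B'} = {B1, B2})"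
    by blast
  then show ?thesis using that[of B1 B2] f by simp
qed

lemma collapsing_not_Sigmapart: "f \<in> collapsing \<tau> \<Longrightarrow> f \<notin> SigmaP"
proof (erule collapsingE)
  fix B1 B2
  assume f: "f \<in> TP" and B: "B1 \<in> P" "B2 \<in> P" "B1 \<noteq> B2"
    and iff: "\<And>B B'. B \<in> P \<Longrightarrow> B' \<in> P \<Longrightarrow> B \<noteq> B' \<Longrightarrow>
       block_map f B = block_map f B' \<longleftrightarrow> {B, B'} = {B1, B2}"
  have "block_map f B1 = block_map f B2" using iff[OF B] by simp
  then have "\<not> inj_on (block_map f) P" using B by (auto dest: inj_onD)
  then show "f \<notin> SigmaP" using f Sigmapart_iff block_map_image_eq_iff_inj by blast
qed

lemma collapsing_type_unique:
  assumes "f \<in> collapsing \<tau>" "f \<in> collapsing \<tau>'"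
  shows "\<tau> = \<tau>'"
proof -
  obtain B1 B2 where "f \<in> TP" "\<And>B. B \<in> P \<Longrightarrow> inj_on f B" "B1 \<in> P" "B2 \<in> P" "B1 \<noteq> B2"
    and \<tau>: "{card B1, card B2} = \<tau>"
    and iff: "\<And>B B'. B \<in> P \<Longrightarrow> B' \<in> P \<Longrightarrow> B \<noteq> B' \<Longrightarrow>
       block_map f B = block_map f B' \<longleftrightarrow> {B, B'} = {B1, B2}"
    using assms(1) by (rule collapsingE) (rule that)
  obtain C1 C2 where "f \<in> TP" "\<And>B. B \<in> P \<Longrightarrow> inj_on f B"
    and C: "C1 \<in> P" "C2 \<in> P" "C1 \<noteq> C2" and \<tau>': "{card C1, card C2} = \<tau>'"
    and iff': "\<And>B B'. B \<in> P \<Longrightarrow> B' \<in> P \<Longrightarrow> B \<noteq> B' \<Longrightarrow>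
       block_map f B = block_map f B' \<longleftrightarrow> {B, B'} = {C1, C2}"
    using assms(2) by (rule collapsingE) (rule that)
  have "{C1, C2} = {B1, B2}" using iff[OF C] iff'[OF C] by simp
  then have "card ` {C1, C2} = card ` {B1, B2}" by simp
  then show ?thesis using \<tau> \<tau>' by simp
qed

lemma collapsing_subset_Tpart: "collapsing \<tau> \<subseteq> TP"
  unfolding collapsing_def by blast

lemma image_block_eq_block_map:
  assumes f: "f \<in> TP" and inj: "inj_on (block_map f) P" and inj_blocks: "\<forall>B\<in>P. inj_on f B"
    and B: "B \<in> P"
  shows "f ` B = block_map f B"
proof -
  have le: "card B \<le> card (block_map f B)" if "B \<in> P" for B
  proof -
    have "card B = card (f ` B)" using inj_blocks that card_image by fastforce
    also have "\<dots> \<le> card (block_map f B)"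
      using image_subset_block_map[OF f that] finite_block[OF block_map_in_blocks[OF f that]]
      by (rule card_mono[rotated])
    finally show ?thesis .
  qed
  have "sum (\<lambda>B. card (block_map f B)) P = sum card (block_map f ` P)"
    using sum.reindex[OF inj, of card] by (simp add: comp_def)
  also have "\<dots> = sum card P"
    using block_map_image_eq_iff_inj[OF f] inj by simp
  finally have sums: "sum (\<lambda>B. card (block_map f B)) P = sum card P" .
  have "card B = card (block_map f B)" using sum_mono_inv[OF sums[symmetric] le B finite_blocks] .
  moreover have "card (f ` B) = card B" using inj_blocks B card_image by blast
  ultimately show ?thesis
    using card_subset_eq[OF finite_block[OF block_map_in_blocks[OF f B]] image_subset_block_map[OF f B]]
    by simp
qed

lemma inj_on_comp_of_compose:
  assumes "inj_on (compose X g f) B" "B \<in> P"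
  shows "inj_on (g \<circ> f) B"
  using assms block_subset[OF assms(2)] by (auto simp: inj_on_def compose_def subset_iff)

lemma collapsing_compose_of_inj:
  assumes f: "f \<in> TP" and g: "g \<in> TP" and inj: "inj_on (block_map f) P"
    and h: "compose X g f \<in> collapsing \<tau>"
  shows "g \<in> collapsing \<tau>"
proof -
  obtain B1 B2 where "compose X g f \<in> TP"
    and inj_h: "\<And>B. B \<in> P \<Longrightarrow> inj_on (compose X g f) B"
    and B: "B1 \<in> P" "B2 \<in> P" "B1 \<noteq> B2" "{card B1, card B2} = \<tau>"
    and iff: "\<And>B B'. B \<in> P \<Longrightarrow> B' \<in> P \<Longrightarrow> B \<noteq> B' \<Longrightarrow>
       block_map (compose X g f) B = block_map (compose X g f) B' \<longleftrightarrow> {B, B'} = {B1, B2}"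
    using h by (rule collapsingE) (rule that)
  have onto: "block_map f ` P = P" using block_map_image_eq_iff_inj[OF f] inj by simp
  have inj_gf: "inj_on (g \<circ> f) B" if "B \<in> P" for B
    using inj_on_comp_of_compose[OF inj_h[OF that] that] .
  have inj_f: "\<forall>B\<in>P. inj_on f B" using inj_gf inj_on_imageI2 by blast
  have image_eq: "f ` B = block_map f B" if "B \<in> P" for B
    using image_block_eq_block_map[OF f inj inj_f that] .
  have card_eq: "card (block_map f B) = card B" if "B \<in> P" for B
    using image_eq[OF that] inj_f that by (metis card_image)
  show ?thesis
  proof (rule collapsingI[OF g])
    fix E assume "E \<in> P"
    then obtain B where B: "B \<in> P" "E = block_map f B" using onto by blast
    then show "inj_on g E" using inj_on_imageI[OF inj_gf[OF B(1)]] image_eq[OF B(1)] by simp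
  next
    show "block_map f B1 \<in> P" "block_map f B2 \<in> P" using B block_map_in_blocks[OF f] by auto
    show "block_map f B1 \<noteq> block_map f B2" using B inj by (auto dest: inj_onD)
    show "{card (block_map f B1), card (block_map f B2)} = \<tau>" using B card_eq by simp
  next
    fix E E' assume "E \<in> P" "E' \<in> P" "E \<noteq> E'"
    then obtain B B' where BB': "B \<in> P" "B' \<in> P" "E = block_map f B" "E' = block_map f B'"
      using onto by (metis imageE)
    then have "B \<noteq> B'" using \<open>E \<noteq> E'\<close> by blast
    have "{E, E'} = {block_map f B1, block_map f B2} \<longleftrightarrow> block_map f ` {B, B'} = block_map f ` {B1, B2}"
      using BB' by simp
    also have "\<dots> \<longleftrightarrow> {B, B'} = {B1, B2}"
      using inj_on_image_eq_iff[OF inj, of "{B, B'}" "{B1, B2}"] BB' B by simp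
    also have "\<dots> \<longleftrightarrow> block_map (compose X g f) B = block_map (compose X g f) B'"
      using iff[OF BB'(1,2) \<open>B \<noteq> B'\<close>] by blast
    also have "\<dots> \<longleftrightarrow> block_map g E = block_map g E'"
      using block_map_compose[OF f g] BB' by simp
    finally show "block_map g E = block_map g E' \<longleftrightarrow> {E, E'} = {block_map f B1, block_map f B2}"
      by simp
  qed
qed

lemma collapsing_compose_of_not_inj:
  assumes f: "f \<in> TP" and g: "g \<in> TP" and not_inj: "\<not> inj_on (block_map f) P"
    and h: "compose X g f \<in> collapsing \<tau>"
  shows "f \<in> collapsing \<tau>"
proof -
  obtain B1 B2 where "compose X g f \<in> TP"
    and inj_h: "\<And>B. B \<in> P \<Longrightarrow> inj_on (compose X g f) B"
    and B: "B1 \<in> P" "B2 \<in> P" "B1 \<noteq> B2" "{card B1, card B2} = \<tau>"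
    and iff: "\<And>B B'. B \<in> P \<Longrightarrow> B' \<in> P \<Longrightarrow> B \<noteq> B' \<Longrightarrow>
       block_map (compose X g f) B = block_map (compose X g f) B' \<longleftrightarrow> {B, B'} = {B1, B2}"
    using h by (rule collapsingE) (rule that)
  have bm_h: "block_map (compose X g f) B = block_map g (block_map f B)" if "B \<in> P" for B
    using block_map_compose[OF f g that] .
  obtain C C' where C: "C \<in> P" "C' \<in> P" "C \<noteq> C'" "block_map f C = block_map f C'"
    using not_inj unfolding inj_on_def by blast
  then have "block_map (compose X g f) C = block_map (compose X g f) C'" using bm_h by simp
  then have "{C, C'} = {B1, B2}" using iff[OF C(1-3)] by blast
  then have collapsed: "block_map f B1 = block_map f B2" using C(4) by (auto simp: doubleton_eq_iff)
  show ?thesis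
  proof (rule collapsingI[OF f _ B])
    show "inj_on f B" if "B \<in> P" for B
      using inj_on_imageI2[OF inj_on_comp_of_compose[OF inj_h[OF that] that]] .
    fix E E' assume E: "E \<in> P" "E' \<in> P" "E \<noteq> E'"
    show "block_map f E = block_map f E' \<longleftrightarrow> {E, E'} = {B1, B2}"
    proof
      assume "block_map f E = block_map f E'"
      then have "block_map (compose X g f) E = block_map (compose X g f) E'" using bm_h E by simp
      then show "{E, E'} = {B1, B2}" using iff[OF E] by blast
    next
      assume "{E, E'} = {B1, B2}"
      then show "block_map f E = block_map f E'" using collapsed by (auto simp: doubleton_eq_iff)
    qed
  qed
qed

lemma collapsing_compose:
  assumes "f \<in> TP" "g \<in> TP" "compose X g f \<in> collapsing \<tau>"
  shows "f \<in> collapsing \<tau> \<or> g \<in> collapsing \<tau>"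
  using collapsing_compose_of_inj[OF assms(1,2) _ assms(3)]
    collapsing_compose_of_not_inj[OF assms(1,2) _ assms(3)] by blast

lemma sgen_collapsing:
  assumes "h \<in> sgen X (SigmaP \<union> W)" "W \<subseteq> TP" "h \<in> collapsing \<tau>"
  shows "\<exists>w\<in>W. w \<in> collapsing \<tau>"
  using assms(1,3)
proof induction
  case (base h)
  then show ?case using collapsing_not_Sigmapart by blast
next
  case (comp f g)
  have "SigmaP \<union> W \<subseteq> TP" using assms(2) Sigmapart_Tpart by blast
  then have "f \<in> TP" "g \<in> TP" using comp.hyps sgen_subset_Tpart by blast+
  then show ?case using collapsing_compose comp.prems comp.IH by blast
qed

lemma card_pair_types_le:
  assumes "W \<subseteq> TP" "finite W" "sgen X (SigmaP \<union> W) = TP"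
    and nonempty: "\<And>\<tau>. \<tau> \<in> pair_types \<Longrightarrow> collapsing \<tau> \<noteq> {}"
  shows "card pair_types \<le> card W"
proof -
  have "\<exists>w\<in>W. w \<in> collapsing \<tau>" if "\<tau> \<in> pair_types" for \<tau>
  proof -
    obtain h where "h \<in> collapsing \<tau>" using nonempty[OF \<open>\<tau> \<in> pair_types\<close>] by blast
    moreover then have "h \<in> sgen X (SigmaP \<union> W)" using collapsing_subset_Tpart assms(3) by blast
    ultimately show ?thesis using sgen_collapsing assms(1) by blast
  qed
  then obtain c where c: "\<And>\<tau>. \<tau> \<in> pair_types \<Longrightarrow> c \<tau> \<in> W \<and> c \<tau> \<in> collapsing \<tau>" by metis
  then have "inj_on c pair_types" by (metis inj_onI collapsing_type_unique)
  moreover have "c ` pair_types \<subseteq> W" using c by blast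
  ultimately show ?thesis using card_inj_on_le assms(2) by blast
qed

section \<open>Moving blocks and the upper bound\<close>

definition move_block :: "'a set \<Rightarrow> 'a set \<Rightarrow> ('a \<Rightarrow> 'a) \<Rightarrow> 'a \<Rightarrow> 'a" where
  "move_block U V \<phi> = (\<lambda>x. if x \<in> X then (if x \<in> U then \<phi> x else x) else undefined)"

lemma
  assumes "U \<in> P" "V \<in> P" "\<phi> ` U \<subseteq> V"
  shows move_block_in_Tpart: "move_block U V \<phi> \<in> TP"
    and block_map_move_block: "B \<in> P \<Longrightarrow> block_map (move_block U V \<phi>) B = (if B = U then V else B)"
proof -
  have mem: "move_block U V \<phi> x \<in> (if B = U then V else B)" if "B \<in> P" "x \<in> B" for B x
  proof (cases "B = U")
    case True then show ?thesis using that assms block_subset by (auto simp: move_block_def)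
  next
    case False
    then have "x \<notin> U" using block_disjoint[OF that(1) assms(1)] that(2) by blast
    then show ?thesis using False that block_subset by (auto simp: move_block_def)
  qed
  have blocks: "(if B = U then V else B) \<in> P" if "B \<in> P" for B using that assms by simp
  have ext: "move_block U V \<phi> x = undefined" if "x \<notin> X" for x
    using that by (simp add: move_block_def)
  show "move_block U V \<phi> \<in> TP"
    and "B \<in> P \<Longrightarrow> block_map (move_block U V \<phi>) B = (if B = U then V else B)"
    using blockwise_in_Tpart[of "move_block U V \<phi>" "\<lambda>B. if B = U then V else B", OF ext blocks mem]
      block_map_blockwise[of "move_block U V \<phi>" "\<lambda>B. if B = U then V else B", OF ext blocks mem]
    by auto
qed

lemma move_block_collapsing:
  assumes "U \<in> P" "V \<in> P" "U \<noteq> V" "\<phi> ` U \<subseteq> V" "inj_on \<phi> U"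
  shows "move_block U V \<phi> \<in> collapsing {card U, card V}"
proof (rule collapsingI[OF move_block_in_Tpart[OF assms(1,2,4)] _ assms(1-3) refl])
  fix B assume B: "B \<in> P"
  show "inj_on (move_block U V \<phi>) B"
  proof (cases "B = U")
    case True
    then show ?thesis using assms(5) block_subset[OF B] by (auto simp: inj_on_def move_block_def)
  next
    case False
    then have "B \<inter> U = {}" using block_disjoint[OF B assms(1)] by blast
    then show ?thesis using block_subset[OF B] by (auto simp: inj_on_def move_block_def)
  qed
next
  fix B B' assume B: "B \<in> P" "B' \<in> P" "B \<noteq> B'"
  show "block_map (move_block U V \<phi>) B = block_map (move_block U V \<phi>) B' \<longleftrightarrow> {B, B'} = {U, V}"
    using block_map_move_block[OF assms(1,2,4)] B assms(3)
    by (cases "B = U"; cases "B' = U") (auto simp: doubleton_eq_iff)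
qed

definition block_perm :: "('a \<Rightarrow> 'a) \<Rightarrow> bool" where
  "block_perm \<pi> \<longleftrightarrow> bij_betw \<pi> X X \<and> (\<forall>B\<in>P. \<pi> ` B \<in> P)"

lemma block_perm_image_blocks:
  assumes "block_perm \<pi>"
  shows "(\<lambda>B. \<pi> ` B) ` P = P"
proof
  show "(\<lambda>B. \<pi> ` B) ` P \<subseteq> P" using assms unfolding block_perm_def by blast
  show "P \<subseteq> (\<lambda>B. \<pi> ` B) ` P"
  proof
    fix E assume E: "E \<in> P"
    obtain y where y: "y \<in> E" using block_nonempty[OF E] by blast
    then have "y \<in> \<pi> ` X" using assms block_subset[OF E] unfolding block_perm_def bij_betw_def by blast
    then obtain x where x: "x \<in> X" "y = \<pi> x" by blast
    then obtain B where B: "B \<in> P" "x \<in> B" using ex_block by blast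
    have "\<pi> ` B \<in> P" using assms B(1) unfolding block_perm_def by blast
    then have "\<pi> ` B = E" using block_eqI[OF _ E, of "\<pi> ` B" y] x(2) B(2) y by blast
    then show "E \<in> (\<lambda>B. \<pi> ` B) ` P" using B(1) by blast
  qed
qed

lemma block_perm_image_inj:
  assumes "block_perm \<pi>" "B \<in> P" "C \<in> P" "\<pi> ` B = \<pi> ` C"
  shows "B = C"
  using assms inj_on_image_eq_iff[of \<pi> X B C] block_subset
  unfolding block_perm_def bij_betw_def by blast

lemma block_perm_inv:
  assumes "block_perm \<pi>"
  shows "block_perm (inv_into X \<pi>)"
  unfolding block_perm_def
proof
  show "bij_betw (inv_into X \<pi>) X X"
    using assms bij_betw_inv_into unfolding block_perm_def by blast
  show "\<forall>B\<in>P. inv_into X \<pi> ` B \<in> P"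
  proof
    fix E assume "E \<in> P"
    then obtain B where B: "B \<in> P" "E = \<pi> ` B" using block_perm_image_blocks[OF assms] by blast
    have "inj_on \<pi> X" using assms unfolding block_perm_def bij_betw_def by blast
    then show "inv_into X \<pi> ` E \<in> P" using B block_subset[OF B(1)] by simp
  qed
qed

lemma block_perm_comp:
  assumes "block_perm \<pi>1" "block_perm \<pi>2"
  shows "block_perm (\<pi>2 \<circ> \<pi>1)"
  using assms bij_betw_trans unfolding block_perm_def by (metis image_comp)

lemma block_swap_exists:
  assumes U: "U \<in> P" and Y: "Y \<in> P" and card_eq: "card U = card Y"
  shows "\<exists>\<pi>. block_perm \<pi> \<and> \<pi> ` U = Y \<and> (\<forall>B\<in>P. B \<noteq> U \<longrightarrow> B \<noteq> Y \<longrightarrow> \<pi> ` B = B)"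
proof (cases "U = Y")
  case True
  then show ?thesis unfolding block_perm_def by (intro exI[of _ id]) simp
next
  case False
  have disj: "U \<inter> Y = {}" using block_disjoint[OF U Y False] by blast
  obtain \<beta> where \<beta>: "bij_betw \<beta> U Y"
    using finite_same_card_bij[OF finite_block[OF U] finite_block[OF Y] card_eq] by blast
  then have \<beta>': "bij_betw (inv_into U \<beta>) Y U" by (rule bij_betw_inv_into)
  define \<pi> where "\<pi> x = (if x \<in> U then \<beta> x else if x \<in> Y then inv_into U \<beta> x else x)" for x
  have "\<pi> ` U = \<beta> ` U" by (rule image_cong) (simp_all add: \<pi>_def)
  then have \<pi>_U: "\<pi> ` U = Y" using \<beta> by (simp add: bij_betw_def)
  have "\<pi> ` Y = inv_into U \<beta> ` Y" by (rule image_cong) (use disj in \<open>auto simp: \<pi>_def\<close>)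
  then have \<pi>_Y: "\<pi> ` Y = U" using \<beta>' by (simp add: bij_betw_def)
  have \<pi>_other: "\<pi> ` B = B" if "B \<in> P" "B \<noteq> U" "B \<noteq> Y" for B
    using block_disjoint[OF that(1) U that(2)] block_disjoint[OF that(1) Y that(3)]
    by (auto simp: \<pi>_def image_def)
  have involution: "\<pi> (\<pi> x) = x" for x
  proof -
    have "\<beta> x \<in> Y" if "x \<in> U" using \<beta> that unfolding bij_betw_def by blast
    moreover have "inv_into U \<beta> x \<in> U" if "x \<in> Y" using \<beta>' that unfolding bij_betw_def by blast
    ultimately show ?thesis using \<beta> disj
      by (auto simp: \<pi>_def bij_betw_def f_inv_into_f)
  qed
  have "\<pi> ` X \<subseteq> X" using \<pi>_U \<pi>_Y block_subset[OF U] block_subset[OF Y] by (auto simp: \<pi>_def)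
  then have "bij_betw \<pi> X X" using involution by (intro bij_betw_byWitness[of X \<pi>]) auto
  moreover have "\<pi> ` B \<in> P" if "B \<in> P" for B
    using \<pi>_U \<pi>_Y \<pi>_other[OF that] U Y that by (cases "B = U"; cases "B = Y") auto
  ultimately show ?thesis using \<pi>_U \<pi>_other unfolding block_perm_def by blast
qed

lemma block_perm_exists:
  assumes "U \<in> P" "V \<in> P" "U \<noteq> V" "Y1 \<in> P" "Y2 \<in> P" "Y1 \<noteq> Y2"
    and "card U = card Y1" "card V = card Y2"
  obtains \<pi> where "block_perm \<pi>" "\<pi> ` U = Y1" "\<pi> ` V = Y2"
proof -
  obtain \<pi>1 where \<pi>1: "block_perm \<pi>1" "\<pi>1 ` U = Y1"
    using block_swap_exists[OF assms(1,4,7)] by blast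
  have V': "\<pi>1 ` V \<in> P" using \<pi>1(1) assms(2) unfolding block_perm_def by blast
  have "inj_on \<pi>1 V"
    using \<pi>1(1) block_subset[OF assms(2)] inj_on_subset unfolding block_perm_def bij_betw_def by blast
  then have "card (\<pi>1 ` V) = card Y2" using assms(8) by (simp add: card_image)
  then obtain \<pi>2 where \<pi>2: "block_perm \<pi>2" "\<pi>2 ` (\<pi>1 ` V) = Y2"
    and fix2: "\<forall>B\<in>P. B \<noteq> \<pi>1 ` V \<longrightarrow> B \<noteq> Y2 \<longrightarrow> \<pi>2 ` B = B"
    using block_swap_exists[OF V' assms(5)] by blast
  have "\<pi>1 ` V \<noteq> Y1"
    using block_perm_image_inj[OF \<pi>1(1) assms(2,1)] \<pi>1(2) assms(3) by blast
  then have "\<pi>2 ` Y1 = Y1" using fix2 assms(4,6) by blast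
  then have "(\<pi>2 \<circ> \<pi>1) ` U = Y1" "(\<pi>2 \<circ> \<pi>1) ` V = Y2"
    unfolding image_comp[symmetric] using \<pi>1(2) \<pi>2(2) by simp_all
  then show ?thesis using that block_perm_comp[OF \<pi>1(1) \<pi>2(1)] by blast
qed

lemma block_perm_pair_exists:
  assumes "U \<in> P" "V \<in> P" "U \<noteq> V" "A1 \<in> P" "A2 \<in> P" "A1 \<noteq> A2"
    and "{card U, card V} = {card A1, card A2}"
  obtains \<pi> where "block_perm \<pi>" "{\<pi> ` U, \<pi> ` V} = {A1, A2}"
proof (cases "card U = card A1 \<and> card V = card A2")
  case True
  then show ?thesis using block_perm_exists[OF assms(1-6)] that by blast
next
  case False
  then have "card U = card A2" "card V = card A1"
    using assms(7) by (auto simp: doubleton_eq_iff)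
  then show ?thesis using block_perm_exists[OF assms(1-3,5,4) assms(6)[symmetric]] that
    by (metis insert_commute)
qed

definition perm_override ::
    "('a \<Rightarrow> 'a) \<Rightarrow> 'a set \<Rightarrow> ('a \<Rightarrow> 'a) \<Rightarrow> 'a set \<Rightarrow> ('a \<Rightarrow> 'a) \<Rightarrow> 'a \<Rightarrow> 'a" where
  "perm_override \<pi> U a V b =
    (\<lambda>x. if x \<in> X then (if x \<in> U then a x else if x \<in> V then b x else \<pi> x) else undefined)"

lemma perm_override_in_Sigmapart:
  assumes \<pi>: "block_perm \<pi>" and UV: "U \<in> P" "V \<in> P" "U \<noteq> V" and UV': "U' \<in> P" "V' \<in> P"
    and "a ` U \<subseteq> U'" "b ` V \<subseteq> V'" and swap: "{\<pi> ` U, \<pi> ` V} = {U', V'}"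
  shows "perm_override \<pi> U a V b \<in> SigmaP"
proof -
  define \<beta> where "\<beta> B = (if B = U then U' else if B = V then V' else \<pi> ` B)" for B
  have blocks: "\<beta> B \<in> P" if "B \<in> P" for B
    using that UV' \<pi> unfolding \<beta>_def block_perm_def by simp
  have mem: "perm_override \<pi> U a V b x \<in> \<beta> B" if B: "B \<in> P" "x \<in> B" for B x
  proof -
    consider "B = U" | "B = V" | "B \<noteq> U" "B \<noteq> V" by blast
    then show ?thesis
    proof cases
      case 1 then show ?thesis using B assms(7) block_subset by (auto simp: \<beta>_def perm_override_def)
    next
      case 2
      then have "x \<notin> U" using block_disjoint[OF UV(2,1)] UV(3) B(2) by blast
      then show ?thesis using 2 B UV(3) assms(8) block_subset by (auto simp: \<beta>_def perm_override_def)
    next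
      case 3
      then have "x \<notin> U" "x \<notin> V" using block_disjoint[OF B(1)] UV B(2) by blast+
      then show ?thesis using 3 B block_subset by (auto simp: \<beta>_def perm_override_def)
    qed
  qed
  have onto: "P \<subseteq> \<beta> ` P"
  proof
    fix E assume "E \<in> P"
    then obtain B where B: "B \<in> P" "E = \<pi> ` B" using block_perm_image_blocks[OF \<pi>] by blast
    show "E \<in> \<beta> ` P"
    proof (cases "B = U \<or> B = V")
      case True
      have "\<beta> U = U'" "\<beta> V = V'" using UV(3) by (simp_all add: \<beta>_def)
      then have "U' \<in> \<beta> ` P" "V' \<in> \<beta> ` P" using UV(1,2) by (metis imageI)+
      moreover have "E \<in> {U', V'}" using True B(2) unfolding swap[symmetric] by auto
      ultimately show ?thesis by blast
    next
      case False
      then have "\<beta> B = E" using B(2) by (simp add: \<beta>_def)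
      then show ?thesis using B(1) by blast
    qed
  qed
  have ext: "perm_override \<pi> U a V b x = undefined" if "x \<notin> X" for x
    using that by (simp add: perm_override_def)
  show ?thesis
    by (rule blockwise_in_Sigmapart[of "perm_override \<pi> U a V b" \<beta>, OF ext blocks mem onto])
qed

text \<open>The outer factors lie in \<open>SigmaP\<close>: the right one sends \<open>U\<close> into \<open>A2\<close>, \<open>V\<close> into \<open>A1\<close>
  and permutes the other blocks by \<open>\<pi>\<close>; the left one undoes this. No point is sent into \<open>A2\<close>,
  so the values \<open>b\<close> there are free; they are used to make the left factor hit \<open>U\<close>.\<close>

lemma move_block_eq_compose:
  assumes UV: "U \<in> P" "V \<in> P" "U \<noteq> V" and A: "A1 \<in> P" "A2 \<in> P" "A1 \<noteq> A2"
    and \<pi>: "block_perm \<pi>" "{\<pi> ` U, \<pi> ` V} = {A1, A2}"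
    and maps: "\<alpha> ` U \<subseteq> A2" "\<kappa> ` V \<subseteq> A1" "\<iota> ` A2 \<subseteq> A1"
    and retr: "\<forall>v\<in>V. \<rho> (\<kappa> v) = v" "\<forall>x\<in>U. \<rho> (\<iota> (\<alpha> x)) = \<phi> x"
  shows "move_block U V \<phi> = compose X (perm_override (inv_into X \<pi>) A1 \<rho> A2 b)
            (compose X (move_block A2 A1 \<iota>) (perm_override \<pi> U \<alpha> V \<kappa>))"
    (is "_ = compose X ?t (compose X ?w ?s)")
proof
  fix z
  have inj_\<pi>: "inj_on \<pi> X" using \<pi>(1) unfolding block_perm_def bij_betw_def by blast
  show "move_block U V \<phi> z = compose X ?t (compose X ?w ?s) z"
  proof (cases "z \<in> X")
    case False then show ?thesis by (simp add: move_block_def compose_def)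
  next
    case z: True
    then obtain B where B: "B \<in> P" "z \<in> B" using ex_block by blast
    have A_X: "A1 \<subseteq> X" "A2 \<subseteq> X" using A block_subset by auto
    consider "B = U" | "B = V" | "B \<noteq> U" "B \<noteq> V" by blast
    then show ?thesis
    proof cases
      case 1
      then have "z \<in> U" using B by simp
      then have "\<alpha> z \<in> A2" using maps(1) by blast
      then have "\<iota> (\<alpha> z) \<in> A1" using maps(3) by blast
      then show ?thesis using z A_X retr(2) \<open>z \<in> U\<close> \<open>\<alpha> z \<in> A2\<close>
        by (auto simp: compose_def move_block_def perm_override_def)
    next
      case 2
      then have "z \<in> V" "z \<notin> U" using B block_disjoint[OF UV(2,1)] UV(3) by auto
      moreover have "\<kappa> z \<in> A1" "\<kappa> z \<notin> A2"
        using maps(2) \<open>z \<in> V\<close> block_disjoint[OF A] by auto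
      ultimately show ?thesis using z A_X retr(1)
        by (auto simp: compose_def move_block_def perm_override_def)
    next
      case 3
      then have "z \<notin> U" "z \<notin> V" using block_disjoint[OF B(1)] UV B(2) by blast+
      have "\<pi> ` B \<noteq> \<pi> ` U" "\<pi> ` B \<noteq> \<pi> ` V"
        using block_perm_image_inj[OF \<pi>(1) B(1)] UV 3 by blast+
      moreover have "A1 \<in> {\<pi> ` U, \<pi> ` V}" "A2 \<in> {\<pi> ` U, \<pi> ` V}" unfolding \<pi>(2) by simp_all
      ultimately have "\<pi> ` B \<noteq> A1" "\<pi> ` B \<noteq> A2" by auto
      moreover have "\<pi> ` B \<in> P" using \<pi>(1) B(1) unfolding block_perm_def by blast
      ultimately have "\<pi> z \<notin> A1" "\<pi> z \<notin> A2" using block_disjoint A B(2) by blast+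
      moreover have "\<pi> z \<in> X" using \<pi>(1) z unfolding block_perm_def bij_betw_def by blast
      ultimately show ?thesis using z \<open>z \<notin> U\<close> \<open>z \<notin> V\<close> inv_into_f_f[OF inj_\<pi> z]
        by (simp add: compose_def move_block_def perm_override_def)
    qed
  qed
qed

lemma move_block_in_sgen:
  assumes UV: "U \<in> P" "V \<in> P" "U \<noteq> V" "\<phi> ` U \<subseteq> V"
    and A: "A1 \<in> P" "A2 \<in> P" "A1 \<noteq> A2" "card A2 \<le> card A1"
    and types: "{card U, card V} = {card A1, card A2}"
    and \<iota>: "\<iota> ` A2 \<subseteq> A1" "inj_on \<iota> A2"
  shows "move_block U V \<phi> \<in> sgen X (SigmaP \<union> {move_block A2 A1 \<iota>})"
proof -
  obtain \<pi> where \<pi>: "block_perm \<pi>" "{\<pi> ` U, \<pi> ` V} = {A1, A2}"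
    using block_perm_pair_exists[OF UV(1-3) A(1-3) types] by blast
  have "card V \<le> card A1" using types A(4) by (auto simp: doubleton_eq_iff)
  moreover have "card (\<phi> ` U) \<le> card A2"
  proof -
    have "card (\<phi> ` U) \<le> card U" by (rule card_image_le[OF finite_block[OF UV(1)]])
    moreover have "card (\<phi> ` U) \<le> card V" by (rule card_mono[OF finite_block[OF UV(2)] UV(4)])
    moreover have "card A2 = card U \<or> card A2 = card V" using types by (auto simp: doubleton_eq_iff)
    ultimately show ?thesis by linarith
  qed
  ultimately obtain \<alpha> \<kappa> \<rho> where maps: "\<alpha> ` U \<subseteq> A2" "\<kappa> ` V \<subseteq> A1" "\<rho> ` A1 \<subseteq> V"
    and retr: "\<forall>v\<in>V. \<rho> (\<kappa> v) = v" "\<forall>x\<in>U. \<rho> (\<iota> (\<alpha> x)) = \<phi> x"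
    using exists_retraction_factorization[OF finite_block[OF UV(2)] finite_block[OF A(1)] _
        block_nonempty[OF UV(2)] UV(4) finite_block[OF A(2)] _ \<iota>]
    by blast
  obtain u where u: "u \<in> U" using block_nonempty[OF UV(1)] by blast
  let ?s = "perm_override \<pi> U \<alpha> V \<kappa>"
  let ?t = "perm_override (inv_into X \<pi>) A1 \<rho> A2 (\<lambda>_. u)"
  let ?S = "SigmaP \<union> {move_block A2 A1 \<iota>}"
  have "{\<pi> ` U, \<pi> ` V} = {A2, A1}" using \<pi>(2) by (simp add: insert_commute)
  then have "?s \<in> SigmaP" by (rule perm_override_in_Sigmapart[OF \<pi>(1) UV(1-3) A(2,1) maps(1,2)])
  moreover have "?t \<in> SigmaP"
  proof -
    have "inj_on \<pi> X" using \<pi>(1) unfolding block_perm_def bij_betw_def by blast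
    then have "inv_into X \<pi> ` \<pi> ` U = U" "inv_into X \<pi> ` \<pi> ` V = V"
      using block_subset UV(1,2) by simp_all
    then have "{inv_into X \<pi> ` A1, inv_into X \<pi> ` A2} = {V, U}"
      using arg_cong[OF \<pi>(2), of "image (image (inv_into X \<pi>))"] by (simp add: insert_commute)
    moreover have "(\<lambda>_. u) ` A2 \<subseteq> U" using u by blast
    ultimately show ?thesis
      using perm_override_in_Sigmapart[OF block_perm_inv[OF \<pi>(1)] A(1-3) UV(2,1) maps(3)] by blast
  qed
  ultimately have "?s \<in> sgen X ?S" "?t \<in> sgen X ?S" "move_block A2 A1 \<iota> \<in> sgen X ?S"
    by (simp_all add: sgen.base)
  then have "compose X ?t (compose X (move_block A2 A1 \<iota>) ?s) \<in> sgen X ?S"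
    by (blast intro: sgen.comp)
  then show ?thesis
    using move_block_eq_compose[OF UV(1-3) A(1-3) \<pi> maps(1,2) \<iota>(1) retr, where b = "\<lambda>_. u"]
    by simp
qed

definition act_on_blocks :: "('a \<Rightarrow> 'a) \<Rightarrow> 'a set set \<Rightarrow> 'a \<Rightarrow> 'a" where
  "act_on_blocks f Q = (\<lambda>x. if x \<in> X then (if x \<in> \<Union>Q then f x else x) else undefined)"

lemma act_on_blocks_in_Sigmapart:
  assumes f: "f \<in> TP" and Q: "Q \<subseteq> P" "block_map f ` Q = Q"
  shows "act_on_blocks f Q \<in> SigmaP"
proof -
  define \<beta> where "\<beta> B = (if B \<in> Q then block_map f B else B)" for B
  have blocks: "\<beta> B \<in> P" if "B \<in> P" for B
    using that block_map_in_blocks[OF f] by (simp add: \<beta>_def)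
  have mem: "act_on_blocks f Q x \<in> \<beta> B" if B: "B \<in> P" "x \<in> B" for B x
  proof (cases "B \<in> Q")
    case True
    then have "x \<in> \<Union>Q" using B(2) by blast
    then show ?thesis using True image_subset_block_map[OF f B(1)] B(2) block_subset[OF B(1)]
      by (auto simp: \<beta>_def act_on_blocks_def)
  next
    case False
    then have "x \<notin> \<Union>Q" using mem_Union_blocks_iff[OF Q(1) B] by simp
    then show ?thesis using False B block_subset[OF B(1)] by (auto simp: \<beta>_def act_on_blocks_def)
  qed
  have onto: "P \<subseteq> \<beta> ` P"
  proof
    fix E assume E: "E \<in> P"
    show "E \<in> \<beta> ` P"
    proof (cases "E \<in> Q")
      case True
      then obtain B where B: "B \<in> Q" "E = block_map f B" using Q(2) by blast
      then have "\<beta> B = E" by (simp add: \<beta>_def)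
      then show ?thesis using B(1) Q(1) by blast
    next
      case False
      then have "\<beta> E = E" by (simp add: \<beta>_def)
      then show ?thesis using E by (metis imageI)
    qed
  qed
  have ext: "act_on_blocks f Q x = undefined" if "x \<notin> X" for x
    using that by (simp add: act_on_blocks_def)
  show ?thesis by (rule blockwise_in_Sigmapart[of "act_on_blocks f Q" \<beta>, OF ext blocks mem onto])
qed

definition act_outside_blocks :: "('a \<Rightarrow> 'a) \<Rightarrow> 'a set set \<Rightarrow> 'a set \<Rightarrow> 'a \<Rightarrow> 'a \<Rightarrow> 'a" where
  "act_outside_blocks f Q U d =
    (\<lambda>x. if x \<in> X then (if x \<in> \<Union>Q then x else if x \<in> U then d else f x) else undefined)"

lemma
  assumes f: "f \<in> TP" and Q: "Q \<subseteq> P" and U: "U \<in> P" and d: "D \<in> P" "d \<in> D"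
  shows act_outside_blocks_in_Tpart: "act_outside_blocks f Q U d \<in> TP"
    and block_map_act_outside_blocks: "B \<in> P \<Longrightarrow> block_map (act_outside_blocks f Q U d) B =
      (if B \<in> Q then B else if B = U then D else block_map f B)"
proof -
  define \<gamma> where "\<gamma> B = (if B \<in> Q then B else if B = U then D else block_map f B)" for B
  have blocks: "\<gamma> B \<in> P" if "B \<in> P" for B
    using that Q d(1) block_map_in_blocks[OF f that] by (auto simp: \<gamma>_def)
  have mem: "act_outside_blocks f Q U d x \<in> \<gamma> B" if B: "B \<in> P" "x \<in> B" for B x
  proof -
    have x: "x \<in> X" using block_subset[OF B(1)] B(2) by blast
    consider "B \<in> Q" | "B \<notin> Q" "B = U" | "B \<notin> Q" "B \<noteq> U" by blast
    then show ?thesis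
    proof cases
      case 1
      then have "x \<in> \<Union>Q" using B(2) by blast
      then show ?thesis using 1 x B(2) by (simp add: act_outside_blocks_def \<gamma>_def)
    next
      case 2
      then have "x \<notin> \<Union>Q" "x \<in> U" using mem_Union_blocks_iff[OF Q B] B(2) by auto
      then show ?thesis using 2 x d(2) by (simp add: act_outside_blocks_def \<gamma>_def)
    next
      case 3
      then have "x \<notin> \<Union>Q" "x \<notin> U"
        using mem_Union_blocks_iff[OF Q B] block_disjoint[OF B(1) U] B(2) by auto
      then show ?thesis using 3 x image_subset_block_map[OF f B(1)] B(2)
        by (auto simp: act_outside_blocks_def \<gamma>_def)
    qed
  qed
  have ext: "act_outside_blocks f Q U d x = undefined" if "x \<notin> X" for x
    using that by (simp add: act_outside_blocks_def)
  show "act_outside_blocks f Q U d \<in> TP"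
    and "B \<in> P \<Longrightarrow> block_map (act_outside_blocks f Q U d) B = \<gamma> B"
    using blockwise_in_Tpart[of _ \<gamma>, OF ext blocks mem] block_map_blockwise[of _ \<gamma>, OF ext blocks mem]
    by auto
qed

text \<open>Here \<open>U\<close> enters the \<open>block_map f\<close>-invariant set \<open>Q\<close>: the right factor performs \<open>f\<close> on
  \<open>Q\<close>, the middle one performs it on \<open>U\<close> and the left one on the remaining blocks. The value \<open>d\<close>
  is never used; it only serves to enlarge the block image of the left factor.\<close>

lemma compose_act_on_blocks_eq:
  assumes f: "f \<in> TP" and Q: "Q \<subseteq> P" "block_map f ` Q = Q"
    and U: "U \<in> P" "U \<notin> Q" "block_map f U \<in> Q"
  shows "f = compose X (act_outside_blocks f Q U d)
              (compose X (move_block U (block_map f U) f) (act_on_blocks f Q))"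
    (is "f = compose X ?g (compose X ?e ?\<sigma>)")
proof
  fix z
  show "f z = compose X ?g (compose X ?e ?\<sigma>) z"
  proof (cases "z \<in> X")
    case False then show ?thesis using Tpart_undefined[OF f] by (simp add: compose_def)
  next
    case z: True
    then obtain B where B: "B \<in> P" "z \<in> B" using ex_block by blast
    have fz: "f z \<in> X" "f z \<in> block_map f B" using Tpart_in_X[OF f z] image_subset_block_map[OF f B(1)] B(2)
      by auto
    have U_Q: "\<forall>E\<in>Q. U \<noteq> E" using U(2) by blast
    consider "B \<in> Q" | "B = U" | "B \<notin> Q" "B \<noteq> U" by blast
    then show ?thesis
    proof cases
      case 1
      then have "block_map f B \<in> Q" using Q(2) by blast
      then have "f z \<in> \<Union>Q" "f z \<notin> U"
        using fz(2) block_disjoint[OF _ U(1), of "block_map f B"] Q(1) U_Q by blast+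
      moreover have "z \<in> \<Union>Q" using 1 B(2) by blast
      ultimately show ?thesis using z fz(1)
        by (simp add: compose_def move_block_def act_on_blocks_def act_outside_blocks_def)
    next
      case 2
      then have "z \<notin> \<Union>Q" "z \<in> U" using mem_Union_blocks_iff[OF Q(1) B] U(2) B(2) by auto
      moreover have "f z \<in> \<Union>Q" using fz(2) 2 U(3) by blast
      ultimately show ?thesis using z fz(1)
        by (simp add: compose_def move_block_def act_on_blocks_def act_outside_blocks_def)
    next
      case 3
      then have "z \<notin> \<Union>Q" "z \<notin> U"
        using mem_Union_blocks_iff[OF Q(1) B] block_disjoint[OF B(1) U(1)] B(2) by auto
      then show ?thesis using z
        by (simp add: compose_def move_block_def act_on_blocks_def act_outside_blocks_def)
    qed
  qed
qed

lemma Tpart_factor: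
  assumes f: "f \<in> TP" and not_onto: "block_map f ` P \<noteq> P"
  obtains \<sigma> U V g where "\<sigma> \<in> SigmaP" "U \<in> P" "V \<in> P" "U \<noteq> V" "f ` U \<subseteq> V" "g \<in> TP"
    "card (block_map f ` P) < card (block_map g ` P)"
    "f = compose X g (compose X (move_block U V f) \<sigma>)"
proof -
  let ?b = "block_map f"
  have into: "?b ` P \<subseteq> P" using block_map_in_blocks[OF f] by blast
  obtain Q U where Q: "Q \<subseteq> P" "?b ` Q = Q" and U: "U \<in> P" "U \<notin> Q" "?b U \<in> Q"
    by (rule exists_invariant_subset_entry[OF finite_blocks into not_onto])
  obtain D where D: "D \<in> P" "D \<notin> ?b ` P" using into not_onto by blast
  obtain d where d: "d \<in> D" using block_nonempty[OF D(1)] by blast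
  let ?g = "act_outside_blocks f Q U d"
  define \<gamma> where "\<gamma> B = (if B \<in> Q then B else if B = U then D else ?b B)" for B
  have g: "?g \<in> TP" "block_map ?g ` P = \<gamma> ` P"
    using act_outside_blocks_in_Tpart[OF f Q(1) U(1) D(1) d]
      block_map_act_outside_blocks[OF f Q(1) U(1) D(1) d] by (auto simp: \<gamma>_def)
  have "?b ` P \<subseteq> \<gamma> ` P"
  proof
    fix E assume "E \<in> ?b ` P"
    then obtain B where B: "B \<in> P" "E = ?b B" by blast
    show "E \<in> \<gamma> ` P"
    proof (cases "B \<in> Q \<or> B = U")
      case True
      then have "E \<in> Q" using B(2) Q(2) U(3) by blast
      then have "\<gamma> E = E" by (simp add: \<gamma>_def)
      then show ?thesis using \<open>E \<in> Q\<close> Q(1) by (metis imageI subsetD)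
    next
      case False
      then have "\<gamma> B = E" using B(2) by (simp add: \<gamma>_def)
      then show ?thesis using B(1) by (metis imageI)
    qed
  qed
  moreover have "\<gamma> U = D" using U(2) by (simp add: \<gamma>_def)
  then have "D \<in> \<gamma> ` P" using U(1) by (metis imageI)
  ultimately have "?b ` P \<subset> \<gamma> ` P" using D(2) by blast
  then have card_lt: "card (?b ` P) < card (block_map ?g ` P)"
    using psubset_card_mono[OF finite_imageI[OF finite_blocks]] g(2) by simp
  have "U \<noteq> ?b U" using U(2,3) by metis
  moreover have "?b U \<in> P" using U(3) Q(1) by blast
  ultimately show ?thesis
    using that[OF act_on_blocks_in_Sigmapart[OF f Q] U(1) _ _ image_subset_block_map[OF f U(1)] g(1)
        card_lt compose_act_on_blocks_eq[OF f Q U]]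
    by blast
qed

lemma sgen_eq_Tpart:
  assumes W: "W \<subseteq> TP"
    and moves: "\<And>U V \<phi>. U \<in> P \<Longrightarrow> V \<in> P \<Longrightarrow> U \<noteq> V \<Longrightarrow> \<phi> ` U \<subseteq> V \<Longrightarrow>
      move_block U V \<phi> \<in> sgen X (SigmaP \<union> W)"
  shows "sgen X (SigmaP \<union> W) = TP"
proof
  show "sgen X (SigmaP \<union> W) \<subseteq> TP" using sgen_subset_Tpart W Sigmapart_Tpart by blast
  show "TP \<subseteq> sgen X (SigmaP \<union> W)"
  proof
    fix f assume "f \<in> TP"
    then show "f \<in> sgen X (SigmaP \<union> W)"
    proof (induction "card P - card (block_map f ` P)" arbitrary: f rule: less_induct)
      case less
      show ?case
      proof (cases "block_map f ` P = P")
        case True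
        then show ?thesis using less.prems Sigmapart_iff by (blast intro: sgen.base)
      next
        case False
        obtain \<sigma> U V g where \<sigma>: "\<sigma> \<in> SigmaP" and UV: "U \<in> P" "V \<in> P" "U \<noteq> V" "f ` U \<subseteq> V"
          and g: "g \<in> TP" "card (block_map f ` P) < card (block_map g ` P)"
          and f_eq: "f = compose X g (compose X (move_block U V f) \<sigma>)"
          using Tpart_factor[OF less.prems False] by blast
        have "block_map g ` P \<subseteq> P" using block_map_in_blocks[OF g(1)] by blast
        then have "card (block_map g ` P) \<le> card P" by (rule card_mono[OF finite_blocks])
        then have "g \<in> sgen X (SigmaP \<union> W)" using less.hyps g by simp
        moreover have "\<sigma> \<in> sgen X (SigmaP \<union> W)" using \<sigma> by (simp add: sgen.base)
        moreover have "move_block U V f \<in> sgen X (SigmaP \<union> W)" using moves[OF UV] .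
        ultimately show ?thesis by (subst f_eq) (blast intro: sgen.comp)
      qed
    qed
  qed
qed

lemma exists_collapsing_generator:
  assumes "\<tau> \<in> pair_types"
  shows "\<exists>w. w \<in> collapsing \<tau> \<and> (\<forall>U V \<phi>. U \<in> P \<longrightarrow> V \<in> P \<longrightarrow> U \<noteq> V \<longrightarrow> {card U, card V} = \<tau> \<longrightarrow>
            \<phi> ` U \<subseteq> V \<longrightarrow> move_block U V \<phi> \<in> sgen X (SigmaP \<union> {w}))"
proof -
  obtain A1 A2 where A: "A1 \<in> P" "A2 \<in> P" "A1 \<noteq> A2" "card A2 \<le> card A1"
    and \<tau>: "\<tau> = {card A1, card A2}"
  proof -
    obtain B1 B2 where B: "B1 \<in> P" "B2 \<in> P" "B1 \<noteq> B2" "\<tau> = {card B1, card B2}"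
      using assms unfolding pair_types_def by blast
    show ?thesis
    proof (cases "card B2 \<le> card B1")
      case True then show ?thesis using that B by blast
    next
      case False then show ?thesis using that[of B2 B1] B by (simp add: insert_commute)
    qed
  qed
  obtain \<iota> where \<iota>: "\<iota> ` A2 \<subseteq> A1" "inj_on \<iota> A2"
    using card_le_inj[OF finite_block[OF A(2)] finite_block[OF A(1)] A(4)] by blast
  have "move_block A2 A1 \<iota> \<in> collapsing \<tau>"
    using move_block_collapsing[OF A(2,1) A(3)[symmetric] \<iota>] \<tau> by (simp add: insert_commute)
  moreover have "move_block U V \<phi> \<in> sgen X (SigmaP \<union> {move_block A2 A1 \<iota>})"
    if "U \<in> P" "V \<in> P" "U \<noteq> V" "{card U, card V} = \<tau>" "\<phi> ` U \<subseteq> V" for U V \<phi>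
    using move_block_in_sgen[OF that(1-3,5) A _ \<iota>] that(4) \<tau> by blast
  ultimately show ?thesis by blast
qed

lemma finite_pair_types: "finite pair_types"
proof (rule finite_subset)
  show "pair_types \<subseteq> Pow (card ` P)" unfolding pair_types_def by blast
  show "finite (Pow (card ` P))" using finite_blocks by simp
qed

lemma relrank_eq_card_pair_types: "relrank X TP SigmaP = card pair_types"
proof -
  obtain w where w: "\<And>\<tau>. \<tau> \<in> pair_types \<Longrightarrow> w \<tau> \<in> collapsing \<tau> \<and>
      (\<forall>U V \<phi>. U \<in> P \<longrightarrow> V \<in> P \<longrightarrow> U \<noteq> V \<longrightarrow> {card U, card V} = \<tau> \<longrightarrow>
        \<phi> ` U \<subseteq> V \<longrightarrow> move_block U V \<phi> \<in> sgen X (SigmaP \<union> {w \<tau>}))"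
    using exists_collapsing_generator by metis
  define W where "W = w ` pair_types"
  have W_T: "W \<subseteq> TP" using w collapsing_subset_Tpart unfolding W_def by blast
  have "sgen X (SigmaP \<union> W) = TP"
  proof (rule sgen_eq_Tpart[OF W_T])
    fix U V \<phi> assume UV: "U \<in> P" "V \<in> P" "U \<noteq> V" "\<phi> ` U \<subseteq> V"
    then have \<tau>: "{card U, card V} \<in> pair_types" unfolding pair_types_def by blast
    then have "move_block U V \<phi> \<in> sgen X (SigmaP \<union> {w {card U, card V}})" using w UV by blast
    moreover have "SigmaP \<union> {w {card U, card V}} \<subseteq> SigmaP \<union> W" using \<tau> unfolding W_def by blast
    ultimately show "move_block U V \<phi> \<in> sgen X (SigmaP \<union> W)" using sgen_mono by blast
  qed
  let ?generating = "\<lambda>k. \<exists>W'. W' \<subseteq> TP \<and> finite W' \<and> card W' = k \<and> sgen X (SigmaP \<union> W') = TP"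
  have W_generating: "?generating (card W)"
    using \<open>sgen X (SigmaP \<union> W) = TP\<close> W_T finite_pair_types unfolding W_def by blast
  then have "relrank X TP SigmaP \<le> card W" unfolding relrank_def by (rule Least_le)
  also have "\<dots> \<le> card pair_types" unfolding W_def by (rule card_image_le[OF finite_pair_types])
  finally have upper: "relrank X TP SigmaP \<le> card pair_types" .
  have "?generating (relrank X TP SigmaP)" unfolding relrank_def using W_generating by (rule LeastI)
  then obtain W' where W': "W' \<subseteq> TP" "finite W'" "card W' = relrank X TP SigmaP"
    "sgen X (SigmaP \<union> W') = TP"
    by blast
  have "collapsing \<tau> \<noteq> {}" if "\<tau> \<in> pair_types" for \<tau> using w[OF that] by blast
  then have "card pair_types \<le> card W'" by (rule card_pair_types_le[OF W'(1,2,4)])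
  then have "card pair_types \<le> relrank X TP SigmaP" using W'(3) by simp
  with upper show ?thesis by simp
qed

section \<open>Counting size types\<close>

lemma pair_types_eq:
  "pair_types = {S. S \<subseteq> card ` P \<and> card S = 2} \<union> (\<lambda>a. {a}) ` {a. 2 \<le> card {B \<in> P. card B = a}}"
proof (intro equalityI subsetI)
  fix S assume "S \<in> pair_types"
  then obtain B1 B2 where B: "B1 \<in> P" "B2 \<in> P" "B1 \<noteq> B2" and S: "S = {card B1, card B2}"
    unfolding pair_types_def by blast
  show "S \<in> {S. S \<subseteq> card ` P \<and> card S = 2} \<union> (\<lambda>a. {a}) ` {a. 2 \<le> card {B \<in> P. card B = a}}"
  proof (cases "card B1 = card B2")
    case True
    have "2 \<le> card {B \<in> P. card B = card B1}"
      using two_le_card_iff[of "{B \<in> P. card B = card B1}"] finite_blocks B True by auto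
    then show ?thesis using S True by auto
  next
    case False
    then show ?thesis using S B by auto
  qed
next
  fix S
  assume S: "S \<in> {S. S \<subseteq> card ` P \<and> card S = 2} \<union> (\<lambda>a. {a}) ` {a. 2 \<le> card {B \<in> P. card B = a}}"
  show "S \<in> pair_types"
  proof (cases "card S = 2")
    case True
    then have "S \<subseteq> card ` P" using S by auto
    moreover obtain x y where xy: "S = {x, y}" "x \<noteq> y" using True by (auto simp: card_2_iff)
    ultimately obtain B1 B2 where "B1 \<in> P" "B2 \<in> P" "x = card B1" "y = card B2" by blast
    then show ?thesis using xy unfolding pair_types_def by blast
  next
    case False
    then obtain a where a: "S = {a}" "2 \<le> card {B \<in> P. card B = a}" using S by auto
    then obtain B1 B2 where "B1 \<in> P" "B2 \<in> P" "B1 \<noteq> B2" "card B1 = a" "card B2 = a"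
      using two_le_card_iff[of "{B \<in> P. card B = a}"] finite_blocks by auto
    then show ?thesis using a(1) unfolding pair_types_def by blast
  qed
qed

lemma card_pair_types:
  "card pair_types = (card (card ` P) choose 2) + card {a. 2 \<le> card {B \<in> P. card B = a}}"
proof -
  let ?R = "{a. 2 \<le> card {B \<in> P. card B = a}}"
  have "?R \<subseteq> card ` P"
  proof
    fix a assume "a \<in> ?R"
    then have "card {B \<in> P. card B = a} \<noteq> 0" by simp
    then have "{B \<in> P. card B = a} \<noteq> {}" by (metis card.empty)
    then show "a \<in> card ` P" by blast
  qed
  then have fin: "finite ?R" using finite_blocks finite_subset by blast
  have "card pair_types = card {S. S \<subseteq> card ` P \<and> card S = 2} + card ((\<lambda>a. {a}) ` ?R)"
    unfolding pair_types_eq by (rule card_Un_disjoint) (use fin finite_blocks in auto)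
  also have "card {S. S \<subseteq> card ` P \<and> card S = 2} = card (card ` P) choose 2"
    using n_subsets[OF finite_imageI[OF finite_blocks]] .
  also have "card ((\<lambda>a. {a}) ` ?R) = card ?R" by (rule card_image) (simp add: inj_on_def)
  finally show ?thesis .
qed

end

lemma block_size_sets:
  fixes P :: "'a set set"
  assumes "finite P"
    and "\<forall>i<p. n i \<ge> 2 \<and> m i \<ge> 2" "\<forall>i<p. card {B \<in> P. card B = n i} = m i"
    and "\<forall>j<q. l j \<ge> 2" "\<forall>j<q. card {B \<in> P. card B = l j} = 1"
    and "card {B \<in> P. card B = 1} = t"
    and "\<forall>B\<in>P. card B = 1 \<or> card B \<in> n ` {..<p} \<or> card B \<in> l ` {..<q}"
  shows "card ` P = n ` {..<p} \<union> l ` {..<q} \<union> (if t = 0 then {} else {1})"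
    and "{a. 2 \<le> card {B \<in> P. card B = a}} = n ` {..<p} \<union> (if t < 2 then {} else {1})"
proof -
  let ?c = "\<lambda>a. card {B \<in> P. card B = a}" and ?N = "n ` {..<p}" and ?L = "l ` {..<q}"
  have sizes: "a \<in> card ` P \<longleftrightarrow> ?c a \<noteq> 0" for a
    using assms(1) by (auto simp: card_eq_0_iff)
  have N: "2 \<le> ?c a" "a \<noteq> 1" "a \<notin> ?L" if "a \<in> ?N" for a
    using that assms(2,3,4,5) by force+
  have L: "?c a = 1" "a \<noteq> 1" if "a \<in> ?L" for a using that assms(4,5) by force+
  have other: "?c a = 0" if "a \<notin> ?N" "a \<notin> ?L" "a \<noteq> 1" for a
    using that assms(7) by (auto simp: card_eq_0_iff)
  have "?c a \<noteq> 0 \<longleftrightarrow> a \<in> ?N \<union> ?L \<union> (if t = 0 then {} else {1})" for a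
    using N[of a] L[of a] other[of a] assms(6)
    by (cases "a \<in> ?N"; cases "a \<in> ?L"; cases "a = 1") auto
  then have "a \<in> card ` P \<longleftrightarrow> a \<in> ?N \<union> ?L \<union> (if t = 0 then {} else {1})" for a
    using sizes by blast
  moreover have "2 \<le> ?c a \<longleftrightarrow> a \<in> ?N \<union> (if t < 2 then {} else {1})" for a
    using N[of a] L[of a] other[of a] assms(6)
    by (cases "a \<in> ?N"; cases "a \<in> ?L"; cases "a = 1") auto
  ultimately show "card ` P = ?N \<union> ?L \<union> (if t = 0 then {} else {1})"
    and "{a. 2 \<le> ?c a} = ?N \<union> (if t < 2 then {} else {1})"
    by blast+
qed

theorem corollary3p4:
  fixes X :: "'a set" and P :: "'a set set"
    and p q t :: nat and n m l :: "nat \<Rightarrow> nat"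
  assumes "finite X" "X \<noteq> {}" "partition_on X P"
    and "\<forall>i<p. n i \<ge> 2 \<and> m i \<ge> 2"
    and "inj_on n {..<p}"
    and "\<forall>j<q. l j \<ge> 2"
    and "inj_on l {..<q}"
    and "l ` {..<q} \<inter> n ` {..<p} = {}"
    and "\<forall>i<p. card {B \<in> P. card B = n i} = m i"
    and "\<forall>j<q. card {B \<in> P. card B = l j} = 1"
    and "card {B \<in> P. card B = 1} = t"
    and "\<forall>B\<in>P. card B = 1 \<or> card B \<in> n ` {..<p} \<or> card B \<in> l ` {..<q}"
  shows "relrank X (Tpart X P) (Sigmapart X P) = ((p + q) choose 2) + p + hfun p q t"
proof -
  interpret partitioned_set X P using assms(1,3) by unfold_locales
  let ?N = "n ` {..<p}" and ?L = "l ` {..<q}"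
  have sizes: "card ` P = ?N \<union> ?L \<union> (if t = 0 then {} else {1})"
    and repeated: "{a. 2 \<le> card {B \<in> P. card B = a}} = ?N \<union> (if t < 2 then {} else {1})"
    using block_size_sets[OF finite_blocks assms(4,9,6,10,11,12)] by blast+
  have "card ?N = p" "card ?L = q" using card_image[OF assms(5)] card_image[OF assms(7)] by simp_all
  moreover have "1 \<notin> ?N" "1 \<notin> ?L" "?N \<inter> ?L = {}" using assms(4,6,8) by force+
  ultimately have "card (card ` P) = p + q + (if t = 0 then 0 else 1)"
    and "card {a. 2 \<le> card {B \<in> P. card B = a}} = p + (if t < 2 then 0 else 1)"
    unfolding sizes repeated by (simp_all add: card_Un_disjoint)
  moreover have "Suc k choose 2 = (k choose 2) + k" for k by (simp add: numeral_2_eq_2)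
  ultimately show ?thesis
    using relrank_eq_card_pair_types card_pair_types by (simp add: hfun_def)
qed

end
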